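(* Let $s\in\mathbb{N}$ and let $X\subseteq\mathbb{C}(\mathbb{Z})$ be the space of sequences $x_t=q(t)$, $q$ a complex polynomial of degree at most $s-1$. For each $m\in\mathbb{N}$ let $\phi^{*,m}_+\in\mathbb{C}^+_m(\mathbb{Z})$ be a reproducing filter for $X$ of minimal $\ell_2$-norm among all reproducing filters for $X$ in $\mathbb{C}^+_m(\mathbb{Z})$. Then $$\lim_{m\to\infty}m\|\phi^{*,m}_+\|_2^2=s^2.$$
   Context: $\mathbb{C}(\mathbb{Z})$: two-sided complex sequences; $\mathbb{C}^+_m(\mathbb{Z})$: sequences with $x_t=0$ for $t\notin\{0,\dots,m\}$. Convolution $(u*v)_t=\sum_\tau u_\tau v_{t-\tau}$; $\phi$ is reproducing for $X$ if $\phi*x=x$ for all $x\in X$. $\|\cdot\|_2$ is the $\ell_2$-norm. *)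

theory Defs
  imports "HOL-Analysis.Analysis" "HOL-Computational_Algebra.Polynomial"
begin

definition conv :: "(int \<Rightarrow> complex) \<Rightarrow> (int \<Rightarrow> complex) \<Rightarrow> int \<Rightarrow> complex" where
  "conv u v t = (\<Sum>\<^sub>\<infinity>\<tau>\<in>UNIV. u \<tau> * v (t - \<tau>))"

definition reproducing :: "(int \<Rightarrow> complex) \<Rightarrow> (int \<Rightarrow> complex) set \<Rightarrow> bool" where
  "reproducing \<phi> X \<longleftrightarrow> (\<forall>x\<in>X. conv \<phi> x = x)"

definition Cplus :: "nat \<Rightarrow> (int \<Rightarrow> complex) set" where
  "Cplus m = {x. \<forall>t. (t < 0 \<or> t > int m) \<longrightarrow> x t = 0}"

definition l2norm :: "(int \<Rightarrow> complex) \<Rightarrow> real" where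
  "l2norm x = sqrt (\<Sum>\<^sub>\<infinity>t\<in>UNIV. (cmod (x t))\<^sup>2)"

text \<open>Sequences given by a complex polynomial of degree at most s-1
  (for s = 0 only the zero polynomial).\<close>
definition polyseq :: "nat \<Rightarrow> (int \<Rightarrow> complex) set" where
  "polyseq s = {x. \<exists>q :: complex poly. (q = 0 \<or> degree q < s) \<and> (\<forall>t. x t = poly q (of_int t))}"

end

(*
  A filter \<psi> supported on {0..m} reproduces the polynomials of degree < s iff its moments
  \<Sum>\<tau> \<psi> \<tau> \<tau>^k are 1 for k = 0 and 0 for 0 < k < s.  Among such filters, one that
  is itself a polynomial of degree < s on {0..m} has the least l2-norm, being the orthogonal
  projection of any other one onto the polynomials.  Writing it as
  \<psi> \<tau> = (1/m) \<Sum>j<s. d j (\<tau>/m)^j, the moment conditions become G_m d = e_0, where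
  G_m i j = (1/m) \<Sum>\<tau>\<le>m. (\<tau>/m)^(i+j) is a Riemann sum for the Hilbert matrix
  H i j = 1/(i+j+1), and m \<parallel>\<psi>\<parallel>^2 = d 0.  Since H is invertible, Cramer's rule shows that
  d 0 tends to the corresponding coordinate of the solution of H c = e_0, and the Cauchy-matrix
  structure of H (partial fractions and Lagrange interpolation) gives c 0 = s^2.
*)

theory Submission
  imports Defs "Jordan_Normal_Form.Determinant"
begin

unbundle no vec_syntax

lemma infsum_eq_sum_atMost_if_supported:
  fixes f :: "int \<Rightarrow> 'a::{comm_monoid_add, t2_space}"
  assumes "\<And>t. t < 0 \<or> t > int m \<Longrightarrow> f t = 0"
  shows "(\<Sum>\<^sub>\<infinity>t\<in>UNIV. f t) = (\<Sum>t\<le>m. f (int t))"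
proof -
  have "(\<Sum>\<^sub>\<infinity>t\<in>UNIV. f t) = (\<Sum>\<^sub>\<infinity>t\<in>int ` {..m}. f t)"
  proof (rule infsum_cong_neutral)
    fix t assume t: "t \<in> UNIV - int ` {..m}"
    show "f t = 0"
    proof (rule assms, rule ccontr)
      assume "\<not> (t < 0 \<or> t > int m)"
      then have "t = int (nat t)" "nat t \<in> {..m}" by auto
      with t show False by blast
    qed
  qed auto
  also have "\<dots> = (\<Sum>t\<le>m. f (int t))"
    by (simp add: sum.reindex)
  finally show ?thesis .
qed

lemma conv_Cplus:
  assumes "\<psi> \<in> Cplus m"
  shows "conv \<psi> x t = (\<Sum>\<tau>\<le>m. \<psi> (int \<tau>) * x (t - int \<tau>))"
  unfolding conv_def
  by (rule infsum_eq_sum_atMost_if_supported) (use assms in \<open>auto simp add: Cplus_def\<close>)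

lemma l2norm_Cplus:
  assumes "\<psi> \<in> Cplus m"
  shows "l2norm \<psi> = L2_set (\<lambda>\<tau>. cmod (\<psi> (int \<tau>))) {..m}"
  unfolding l2norm_def L2_set_def
  by (subst infsum_eq_sum_atMost_if_supported) (use assms in \<open>auto simp add: Cplus_def\<close>)

lemma l2norm_nonneg: "l2norm x \<ge> 0"
  unfolding l2norm_def by (intro real_sqrt_ge_zero infsum_nonneg) auto

definition unit_moments :: "nat \<Rightarrow> nat \<Rightarrow> (int \<Rightarrow> complex) \<Rightarrow> bool" where
  "unit_moments m n \<psi> \<longleftrightarrow> (\<forall>k<n. (\<Sum>\<tau>\<le>m. \<psi> (int \<tau>) * of_nat \<tau> ^ k) = of_bool (k = 0))"

lemma sum_mult_poly_if_unit_moments: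
  assumes "unit_moments m n \<psi>" and "degree p < n"
  shows "(\<Sum>\<tau>\<le>m. \<psi> (int \<tau>) * poly p (of_nat \<tau>)) = poly p 0"
proof -
  have "(\<Sum>\<tau>\<le>m. \<psi> (int \<tau>) * poly p (of_nat \<tau>)) =
        (\<Sum>i\<le>degree p. coeff p i * (\<Sum>\<tau>\<le>m. \<psi> (int \<tau>) * of_nat \<tau> ^ i))"
    unfolding poly_altdef sum_distrib_left
    by (subst sum.swap) (simp add: mult_ac)
  also have "\<dots> = (\<Sum>i\<le>degree p. coeff p i * of_bool (i = 0))"
    using assms by (intro sum.cong refl) (simp add: unit_moments_def)
  also have "\<dots> = (\<Sum>i\<le>degree p. if i = 0 then coeff p i else 0)"
    by (intro sum.cong) auto
  also have "\<dots> = poly p 0"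
    by (simp add: poly_0_coeff_0)
  finally show ?thesis .
qed

lemma reproducing_polyseq_iff_unit_moments:
  assumes \<psi>: "\<psi> \<in> Cplus m"
  shows "reproducing \<psi> (polyseq n) \<longleftrightarrow> unit_moments m n \<psi>"
proof
  assume R: "reproducing \<psi> (polyseq n)"
  show "unit_moments m n \<psi>"
    unfolding unit_moments_def
  proof (intro allI impI)
    fix k assume "k < n"
    define x where "x t = poly ([:0, -1:] ^ k) (of_int t :: complex)" for t
    have "x \<in> polyseq n"
      unfolding polyseq_def x_def using \<open>k < n\<close>
      by (intro CollectI exI[of _ "[:0, -1:] ^ k"]) (simp add: degree_power_eq)
    then have "conv \<psi> x = x"
      using R unfolding reproducing_def by blast
    have "(\<Sum>\<tau>\<le>m. \<psi> (int \<tau>) * of_nat \<tau> ^ k) = conv \<psi> x 0"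
      by (simp add: conv_Cplus[OF \<psi>] x_def)
    also have "\<dots> = x 0"
      using \<open>conv \<psi> x = x\<close> by simp
    also have "\<dots> = of_bool (k = 0)"
      by (simp add: x_def)
    finally show "(\<Sum>\<tau>\<le>m. \<psi> (int \<tau>) * of_nat \<tau> ^ k) = of_bool (k = 0)" .
  qed
next
  assume M: "unit_moments m n \<psi>"
  show "reproducing \<psi> (polyseq n)"
    unfolding reproducing_def
  proof
    fix x assume "x \<in> polyseq n"
    then obtain q :: "complex poly" where q: "q = 0 \<or> degree q < n" and x: "\<And>t. x t = poly q (of_int t)"
      unfolding polyseq_def by auto
    show "conv \<psi> x = x"
    proof
      fix t
      define r where "r = q \<circ>\<^sub>p [:of_int t, -1:]"
      have "conv \<psi> x t = (\<Sum>\<tau>\<le>m. \<psi> (int \<tau>) * poly r (of_nat \<tau>))"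
        by (simp add: conv_Cplus[OF \<psi>] x r_def poly_pcompose)
      also have "\<dots> = poly r 0"
      proof (cases "q = 0")
        case False
        with q have "degree r < n"
          by (simp add: r_def degree_pcompose)
        with M show ?thesis
          by (rule sum_mult_poly_if_unit_moments)
      qed (simp add: r_def)
      also have "\<dots> = x t"
        by (simp add: r_def poly_pcompose x)
      finally show "conv \<psi> x t = x t" .
    qed
  qed
qed

definition poly_filter :: "nat \<Rightarrow> complex poly \<Rightarrow> int \<Rightarrow> complex" where
  "poly_filter m p t = (if 0 \<le> t \<and> t \<le> int m then poly p (of_int t) else 0)"

lemma poly_filter_Cplus: "poly_filter m p \<in> Cplus m"
  by (simp add: Cplus_def poly_filter_def)

lemma poly_filter_of_nat: "\<tau> \<le> m \<Longrightarrow> poly_filter m p (int \<tau>) = poly p (of_nat \<tau>)"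
  by (simp add: poly_filter_def)

lemma inner_poly_filter:
  assumes "unit_moments m n \<phi>" and "degree p < n"
  shows "(\<Sum>\<tau>\<le>m. \<phi> (int \<tau>) * cnj (poly_filter m p (int \<tau>))) = cnj (poly p 0)"
proof -
  have "(\<Sum>\<tau>\<le>m. \<phi> (int \<tau>) * cnj (poly_filter m p (int \<tau>))) =
        (\<Sum>\<tau>\<le>m. \<phi> (int \<tau>) * poly (map_poly cnj p) (of_nat \<tau>))"
    by (intro sum.cong refl) (simp only: atMost_iff poly_filter_of_nat poly_cnj complex_cnj_of_nat)
  also have "\<dots> = poly (map_poly cnj p) 0"
    using assms by (intro sum_mult_poly_if_unit_moments) (simp_all add: degree_map_poly)
  finally show ?thesis
    by (simp only: poly_cnj complex_cnj_zero)
qed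

lemma l2norm_poly_filter:
  assumes "unit_moments m n (poly_filter m p)" and "degree p < n"
  shows "complex_of_real ((l2norm (poly_filter m p))\<^sup>2) = cnj (poly p 0)"
proof -
  let ?\<psi> = "poly_filter m p"
  have "(l2norm ?\<psi>)\<^sup>2 = (\<Sum>\<tau>\<le>m. (cmod (?\<psi> (int \<tau>)))\<^sup>2)"
    by (simp add: l2norm_Cplus[OF poly_filter_Cplus] L2_set_def sum_nonneg)
  then have "complex_of_real ((l2norm ?\<psi>)\<^sup>2) = (\<Sum>\<tau>\<le>m. ?\<psi> (int \<tau>) * cnj (?\<psi> (int \<tau>)))"
    by (simp only: of_real_sum complex_norm_square)
  also have "\<dots> = cnj (poly p 0)"
    using assms by (rule inner_poly_filter)
  finally show ?thesis .
qed

lemma l2norm_poly_filter_le: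
  assumes "unit_moments m n (poly_filter m p)" and "degree p < n"
    and "\<phi> \<in> Cplus m" and "unit_moments m n \<phi>"
  shows "l2norm (poly_filter m p) \<le> l2norm \<phi>"
proof -
  let ?\<psi> = "poly_filter m p"
  have "(l2norm ?\<psi>)\<^sup>2 = cmod (complex_of_real ((l2norm ?\<psi>)\<^sup>2))"
    by (simp add: norm_power)
  also have "\<dots> = cmod (\<Sum>\<tau>\<le>m. \<phi> (int \<tau>) * cnj (?\<psi> (int \<tau>)))"
    \<comment> \<open>\<open>\<langle>\<phi>, \<psi>\<rangle> = \<parallel>\<psi>\<parallel>\<^sup>2\<close>: \<open>\<psi>\<close> is the orthogonal projection of \<open>\<phi>\<close>
      onto the polynomial filters\<close>
    by (simp only: l2norm_poly_filter[OF assms(1,2)] inner_poly_filter[OF assms(4,2)])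
  also have "\<dots> \<le> (\<Sum>\<tau>\<le>m. cmod (\<phi> (int \<tau>)) * cmod (?\<psi> (int \<tau>)))"
    by (rule order.trans[OF norm_sum]) (simp add: norm_mult)
  also have "\<dots> \<le> l2norm \<phi> * l2norm ?\<psi>"
    using L2_set_mult_ineq[of "\<lambda>\<tau>. cmod (\<phi> (int \<tau>))" "\<lambda>\<tau>. cmod (?\<psi> (int \<tau>))" "{..m}"]
    by (simp add: l2norm_Cplus[OF poly_filter_Cplus] l2norm_Cplus[OF assms(3)])
  finally have le: "l2norm ?\<psi> * l2norm ?\<psi> \<le> l2norm \<phi> * l2norm ?\<psi>"
    by (simp add: power2_eq_square)
  show ?thesis
  proof (cases "l2norm ?\<psi> = 0")
    case False
    then have "l2norm ?\<psi> > 0"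
      using l2norm_nonneg[of ?\<psi>] by simp
    with le show ?thesis
      by (rule mult_right_le_imp_le)
  qed (simp add: l2norm_nonneg)
qed

lemma power_Suc_increment_bounds:
  fixes x :: real
  assumes "x \<ge> 0"
  shows "real (Suc k) * x ^ k \<le> (x + 1) ^ Suc k - x ^ Suc k"
    and "(x + 1) ^ Suc k - x ^ Suc k \<le> real (Suc k) * (x + 1) ^ k"
proof -
  have diff: "(x + 1) ^ Suc k - x ^ Suc k = (\<Sum>i<Suc k. x ^ (k - i) * (x + 1) ^ i)"
    using power_diff_sumr2[of "x + 1" "Suc k" x] by simp
  have "x ^ k = x ^ (k - i) * x ^ i" if "i < Suc k" for i
    using that by (simp flip: power_add)
  then have "x ^ k \<le> x ^ (k - i) * (x + 1) ^ i" if "i < Suc k" for i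
    using that assms by (simp add: mult_left_mono power_mono)
  then have "(\<Sum>i<Suc k. x ^ k) \<le> (\<Sum>i<Suc k. x ^ (k - i) * (x + 1) ^ i)"
    by (intro sum_mono) simp
  then show "real (Suc k) * x ^ k \<le> (x + 1) ^ Suc k - x ^ Suc k"
    unfolding diff by (simp del: sum.lessThan_Suc)
  have "(x + 1) ^ k = (x + 1) ^ (k - i) * (x + 1) ^ i" if "i < Suc k" for i
    using that by (simp flip: power_add)
  then have "x ^ (k - i) * (x + 1) ^ i \<le> (x + 1) ^ k" if "i < Suc k" for i
    using that assms by (simp add: mult_right_mono power_mono)
  then have "(\<Sum>i<Suc k. x ^ (k - i) * (x + 1) ^ i) \<le> (\<Sum>i<Suc k. (x + 1) ^ k)"
    by (intro sum_mono) simp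
  then show "(x + 1) ^ Suc k - x ^ Suc k \<le> real (Suc k) * (x + 1) ^ k"
    unfolding diff by (simp del: sum.lessThan_Suc)
qed

lemma sum_powers_lower_bound: "real m ^ Suc k \<le> real (Suc k) * (\<Sum>t\<le>m. real t ^ k)"
proof (induction m)
  case (Suc m)
  have "real (Suc m) ^ Suc k \<le> real m ^ Suc k + real (Suc k) * real (Suc m) ^ k"
    using power_Suc_increment_bounds(2)[of "real m" k] by (simp add: add.commute)
  with Suc show ?case
    by (simp add: distrib_left)
qed simp

lemma sum_powers_upper_bound: "real (Suc k) * (\<Sum>t\<le>m. real t ^ k) \<le> real (Suc m) ^ Suc k"
proof (induction m)
  case 0
  then show ?case by (cases k) simp_all
next
  case (Suc m)
  have "real (Suc k) * real (Suc m) ^ k \<le> real (Suc (Suc m)) ^ Suc k - real (Suc m) ^ Suc k"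
    using power_Suc_increment_bounds(1)[of "real (Suc m)" k] by (simp add: add.commute)
  with Suc show ?case
    by (simp add: distrib_left)
qed

definition riemann_moment :: "nat \<Rightarrow> nat \<Rightarrow> real" where
  "riemann_moment m k = (\<Sum>t\<le>m. (real t / real m) ^ k) / real m"

lemma riemann_moment_eq: "riemann_moment m k = (\<Sum>t\<le>m. real t ^ k) / real m ^ Suc k"
  by (simp add: riemann_moment_def power_divide flip: sum_divide_distrib)

lemma riemann_moment_tendsto: "(\<lambda>m. riemann_moment m k) \<longlonglongrightarrow> 1 / real (Suc k)"
proof (rule tendsto_sandwich)
  show "\<forall>\<^sub>F m in sequentially. 1 / real (Suc k) \<le> riemann_moment m k"
    using eventually_gt_at_top[of 0]
  proof eventually_elim
    case (elim m)
    then show ?case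
      using sum_powers_lower_bound[of m k]
      by (simp add: riemann_moment_eq field_simps)
  qed
  show "\<forall>\<^sub>F m in sequentially. riemann_moment m k \<le> (1 + 1 / real m) ^ Suc k / real (Suc k)"
    using eventually_gt_at_top[of 0]
  proof eventually_elim
    case (elim m)
    have "(\<Sum>t\<le>m. real t ^ k) \<le> real (Suc m) ^ Suc k / real (Suc k)"
      using sum_powers_upper_bound[of k m] by (simp add: pos_le_divide_eq mult.commute)
    then have "riemann_moment m k \<le> real (Suc m) ^ Suc k / real (Suc k) / real m ^ Suc k"
      unfolding riemann_moment_eq by (rule divide_right_mono) simp
    also have "\<dots> = (real (Suc m) / real m) ^ Suc k / real (Suc k)"
      by (simp add: power_divide)
    also have "real (Suc m) / real m = 1 + 1 / real m"
      using elim by (simp add: field_simps)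
    finally show ?case .
  qed
  have "(\<lambda>m. (1 + 1 / real m) ^ Suc k / real (Suc k)) \<longlonglongrightarrow> (1 + 0) ^ Suc k / real (Suc k)"
    by (intro tendsto_intros lim_inverse_n') auto
  then show "(\<lambda>m. (1 + 1 / real m) ^ Suc k / real (Suc k)) \<longlonglongrightarrow> 1 / real (Suc k)"
    by simp
qed simp

definition lagrange_basis :: "(nat \<Rightarrow> 'a::field) \<Rightarrow> nat \<Rightarrow> nat \<Rightarrow> 'a poly" where
  "lagrange_basis a n j = (\<Prod>l\<in>{..<n} - {j}. Polynomial.smult (1 / (a j - a l)) [:- a l, 1:])"

lemma poly_lagrange_basis:
  "poly (lagrange_basis a n j) x = (\<Prod>l\<in>{..<n} - {j}. (x - a l) / (a j - a l))"
  unfolding lagrange_basis_def poly_prod by (intro prod.cong refl) (simp add: diff_divide_distrib)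

lemma degree_lagrange_basis:
  assumes "j < n"
  shows "degree (lagrange_basis a n j) \<le> n - 1"
proof -
  have "degree (lagrange_basis a n j) \<le>
      sum (degree \<circ> (\<lambda>l. Polynomial.smult (1 / (a j - a l)) [:- a l, 1:])) ({..<n} - {j})"
    unfolding lagrange_basis_def by (rule degree_prod_sum_le) simp
  also have "\<dots> \<le> (\<Sum>l\<in>{..<n} - {j}. 1)"
    by (intro sum_mono) simp
  also have "\<dots> = n - 1"
    using assms by simp
  finally show ?thesis .
qed

lemma poly_lagrange_basis_node:
  assumes "inj_on a {..<n}" and "j < n" and "k < n"
  shows "poly (lagrange_basis a n j) (a k) = of_bool (k = j)"
proof (cases "k = j")
  case True
  have "a j \<noteq> a l" if "l \<in> {..<n} - {j}" for l
    using assms(1,2) that by (auto dest: inj_onD)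
  with True show ?thesis
    by (auto simp: poly_lagrange_basis intro!: prod.neutral)
next
  case False
  then show ?thesis
    using assms by (auto simp: poly_lagrange_basis intro!: prod_zero bexI[of _ k])
qed

definition lagrange_poly :: "(nat \<Rightarrow> 'a::field) \<Rightarrow> (nat \<Rightarrow> 'a) \<Rightarrow> nat \<Rightarrow> 'a poly" where
  "lagrange_poly a v n = (\<Sum>j<n. Polynomial.smult (v j) (lagrange_basis a n j))"

lemma poly_lagrange_poly:
  "poly (lagrange_poly a v n) x = (\<Sum>j<n. v j * poly (lagrange_basis a n j) x)"
  by (simp add: lagrange_poly_def poly_sum)

lemma degree_lagrange_poly:
  assumes "n > 0"
  shows "degree (lagrange_poly a v n) < n"
proof -
  have "degree (lagrange_poly a v n) \<le> n - 1"
    unfolding lagrange_poly_def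
    by (intro degree_sum_le order.trans[OF degree_smult_le] degree_lagrange_basis) auto
  with assms show ?thesis by linarith
qed

lemma poly_lagrange_poly_node:
  assumes "inj_on a {..<n}" and "k < n"
  shows "poly (lagrange_poly a v n) (a k) = v k"
proof -
  have "poly (lagrange_poly a v n) (a k) = (\<Sum>j<n. if j = k then v j else 0)"
    unfolding poly_lagrange_poly
    by (intro sum.cong refl) (use assms in \<open>auto simp: poly_lagrange_basis_node\<close>)
  also have "\<dots> = v k"
    using assms(2) by simp
  finally show ?thesis .
qed

lemma lagrange_poly_eq:
  fixes p :: "'a::field poly"
  assumes "inj_on a {..<n}" and "degree p < n"
  shows "lagrange_poly a (\<lambda>j. poly p (a j)) n = p"
proof (rule poly_eqI_degree)
  show "poly (lagrange_poly a (\<lambda>j. poly p (a j)) n) x = poly p x" if "x \<in> a ` {..<n}" for x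
    using that assms(1) by (auto simp: poly_lagrange_poly_node)
  show "degree (lagrange_poly a (\<lambda>j. poly p (a j)) n) < card (a ` {..<n})"
    using assms by (simp add: card_image degree_lagrange_poly)
  show "degree p < card (a ` {..<n})"
    using assms by (simp add: card_image)
qed

lemma partial_fractions_shifted:
  fixes F :: "real poly"
  assumes "degree F < n" and "\<And>l. l < n \<Longrightarrow> y + real l + 1 \<noteq> 0"
  shows "poly F y = (\<Prod>l<n. y + real l + 1) *
    (\<Sum>j<n. poly F (- real j - 1) / (\<Prod>l\<in>{..<n} - {j}. real l - real j) / (y + real j + 1))"
proof -
  define a where "a l = - real l - 1" for l
  have "inj_on a {..<n}"
    by (auto simp: a_def inj_on_def)
  then have "poly F y = (\<Sum>j<n. poly F (a j) * poly (lagrange_basis a n j) y)"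
    using lagrange_poly_eq[of a n F] assms(1) by (metis poly_lagrange_poly)
  also have "\<dots> = (\<Sum>j<n. (\<Prod>l<n. y + real l + 1) *
      (poly F (- real j - 1) / (\<Prod>l\<in>{..<n} - {j}. real l - real j) / (y + real j + 1)))"
    (is "_ = (\<Sum>j<n. _ * (_ / ?Q j / _))")
  proof (intro sum.cong refl)
    fix j assume "j \<in> {..<n}"
    define P where "P = (\<Prod>l\<in>{..<n} - {j}. y + real l + 1)"
    have D: "(\<Prod>l<n. y + real l + 1) = (y + real j + 1) * P"
      using \<open>j \<in> {..<n}\<close> by (simp add: P_def prod.remove)
    have B: "poly (lagrange_basis a n j) y = P / ?Q j"
      unfolding poly_lagrange_basis P_def prod_dividef[symmetric]
      by (intro prod.cong refl) (simp add: a_def algebra_simps)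
    have "y + real j + 1 \<noteq> 0"
      using assms(2) \<open>j \<in> {..<n}\<close> by simp
    then show "poly F (a j) * poly (lagrange_basis a n j) y = (\<Prod>l<n. y + real l + 1) *
        (poly F (- real j - 1) / ?Q j / (y + real j + 1))"
      unfolding D B by (simp add: a_def)
  qed
  finally show ?thesis
    by (simp add: sum_distrib_left)
qed

text \<open>The Hilbert matrix is a Cauchy matrix: if F interpolates the values
  b i * (\<Prod>l<n. i + l + 1) at the nodes i < n, the partial-fraction coefficients of
  F y / (\<Prod>l<n. y + l + 1) solve the Hilbert system with right-hand side b.\<close>

definition hilbert_solution :: "nat \<Rightarrow> (nat \<Rightarrow> real) \<Rightarrow> nat \<Rightarrow> real" where
  "hilbert_solution n b j =
     poly (lagrange_poly real (\<lambda>i. b i * (\<Prod>l<n. real i + real l + 1)) n) (- real j - 1) /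
     (\<Prod>l\<in>{..<n} - {j}. real l - real j)"

lemma sum_hilbert_solution:
  assumes "i < n"
  shows "(\<Sum>j<n. hilbert_solution n b j / real (i + j + 1)) = b i"
proof -
  define F where "F = lagrange_poly real (\<lambda>i. b i * (\<Prod>l<n. real i + real l + 1)) n"
  have "degree F < n"
    using assms by (simp add: F_def degree_lagrange_poly)
  have "b i * (\<Prod>l<n. real i + real l + 1) = poly F (real i)"
    using assms by (simp add: F_def poly_lagrange_poly_node inj_on_def)
  also have "\<dots> = (\<Prod>l<n. real i + real l + 1) * (\<Sum>j<n. hilbert_solution n b j / real (i + j + 1))"
    using partial_fractions_shifted[OF \<open>degree F < n\<close>, of "real i"]
    by (simp add: hilbert_solution_def F_def add_ac)
  finally show ?thesis
    by (simp add: prod_pos)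
qed

lemma hilbert_solution_unit_0:
  assumes "n > 0"
  shows "hilbert_solution n (\<lambda>i. of_bool (i = 0)) 0 = (real n)\<^sup>2"
proof -
  define v where "v i = of_bool (i = 0) * (\<Prod>l<n. real i + real l + 1)" for i :: nat
  have fact_n: "(\<Prod>l<n. real l + 1) = fact n"
    by (induction n) (simp_all add: algebra_simps)
  have "{..<n} - {0} = {1..n - 1}"
    using assms by auto
  then have fact_n1: "(\<Prod>l\<in>{..<n} - {0}. real l) = fact (n - 1)"
    by (simp add: fact_prod)
  have "(\<Prod>l\<in>{..<n} - {0}. real l + 1) = (\<Prod>l<n. real l + 1)"
    using assms by (simp add: prod.remove[of "{..<n}" 0])
  then have fact_n': "(\<Prod>l\<in>{..<n} - {0}. real l + 1) = fact n"
    using fact_n by simp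
  have "poly (lagrange_poly real v n) (- 1) = v 0 * poly (lagrange_basis real n 0) (- 1)"
    unfolding poly_lagrange_poly using assms by (subst sum.remove[of _ 0]) (auto simp: v_def)
  also have "v 0 = fact n"
    using fact_n by (simp add: v_def)
  also have "poly (lagrange_basis real n 0) (- 1) =
      (\<Prod>l\<in>{..<n} - {0}. real l + 1) / (\<Prod>l\<in>{..<n} - {0}. real l)"
    unfolding poly_lagrange_basis prod_dividef[symmetric]
    by (intro prod.cong refl) (simp add: minus_divide_left)
  finally have "poly (lagrange_poly real v n) (- 1) = fact n * (fact n / fact (n - 1))"
    by (simp only: fact_n' fact_n1)
  moreover have "fact n = real n * fact (n - 1)"
    using assms by (rule fact_reduce)
  ultimately show ?thesis
    using fact_n1 by (simp add: hilbert_solution_def v_def[abs_def] power2_eq_square)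
qed

definition hilbert_mat :: "nat \<Rightarrow> real mat" where
  "hilbert_mat n = mat n n (\<lambda>(i, j). 1 / real (i + j + 1))"

lemma mat_mult_vec_nth:
  assumes "i < n"
  shows "(mat n n f *\<^sub>v vec n d) $ i = (\<Sum>k<n. f (i, k) * d k)"
  using assms by (auto simp: scalar_prod_def atLeast0LessThan intro!: sum.cong)

lemma hilbert_mat_mult_vec: "hilbert_mat n *\<^sub>v vec n (hilbert_solution n b) = vec n b"
proof (rule eq_vecI)
  fix i assume "i < dim_vec (vec n b)"
  then have "i < n" by simp
  have "(hilbert_mat n *\<^sub>v vec n (hilbert_solution n b)) $ i =
      (\<Sum>j<n. hilbert_solution n b j / real (i + j + 1))"
    unfolding hilbert_mat_def mat_mult_vec_nth[OF \<open>i < n\<close>] by simp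
  also have "\<dots> = vec n b $ i"
    using sum_hilbert_solution[OF \<open>i < n\<close>] \<open>i < n\<close> by simp
  finally show "(hilbert_mat n *\<^sub>v vec n (hilbert_solution n b)) $ i = vec n b $ i" .
qed (simp add: hilbert_mat_def)

lemma det_hilbert_mat_nonzero: "Determinant.det (hilbert_mat n) \<noteq> 0"
proof -
  define B where "B = mat n n (\<lambda>(j, k). hilbert_solution n (\<lambda>i. of_bool (i = k)) j)"
  have B: "B \<in> carrier_mat n n" and H: "hilbert_mat n \<in> carrier_mat n n"
    by (simp_all add: B_def hilbert_mat_def)
  have "hilbert_mat n * B = 1\<^sub>m n"
  proof (rule eq_matI)
    fix i k assume "i < dim_row (1\<^sub>m n)" "k < dim_col (1\<^sub>m n)"
    then have "i < n" "k < n" by simp_all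
    then have "(hilbert_mat n * B) $$ (i, k) =
        (\<Sum>j<n. hilbert_solution n (\<lambda>i. of_bool (i = k)) j / real (i + j + 1))"
      by (auto simp: hilbert_mat_def B_def scalar_prod_def atLeast0LessThan intro!: sum.cong)
    also have "\<dots> = 1\<^sub>m n $$ (i, k)"
      using sum_hilbert_solution[OF \<open>i < n\<close>, of "\<lambda>i. of_bool (i = k)"] \<open>i < n\<close> \<open>k < n\<close>
      by simp
    finally show "(hilbert_mat n * B) $$ (i, k) = 1\<^sub>m n $$ (i, k)" .
  qed (use H B in auto)
  then have "Determinant.det (hilbert_mat n) * Determinant.det B = 1"
    by (metis det_mult[OF H B] det_one)
  then show ?thesis by auto
qed

lemma det_tendsto:
  fixes A :: "'b \<Rightarrow> 'a::real_normed_field mat"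
  assumes "\<And>m. A m \<in> carrier_mat n n" and "B \<in> carrier_mat n n"
    and "\<And>i j. i < n \<Longrightarrow> j < n \<Longrightarrow> ((\<lambda>m. A m $$ (i, j)) \<longlongrightarrow> B $$ (i, j)) F"
  shows "((\<lambda>m. Determinant.det (A m)) \<longlongrightarrow> Determinant.det B) F"
proof -
  have "((\<lambda>m. \<Sum>p | p permutes {0..<n}. of_int (sign p) * (\<Prod>i = 0..<n. A m $$ (i, p i)))
      \<longlongrightarrow> (\<Sum>p | p permutes {0..<n}. of_int (sign p) * (\<Prod>i = 0..<n. B $$ (i, p i)))) F"
  proof (intro tendsto_sum tendsto_mult tendsto_const tendsto_prod)
    fix p i assume "p \<in> {p. p permutes {0..<n}}" and "i \<in> {0..<n}"
    then have "p i < n"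
      using permutes_in_image by fastforce
    with \<open>i \<in> {0..<n}\<close> show "((\<lambda>m. A m $$ (i, p i)) \<longlongrightarrow> B $$ (i, p i)) F"
      using assms(3) by simp
  qed
  moreover have "dim_row (A m) = n" "dim_col (A m) = n" for m
    using assms(1)[of m] by auto
  ultimately show ?thesis
    using assms(2) by (simp add: det_def)
qed

lemma mult_mat_vec_solvable:
  fixes A :: "'a::field mat"
  assumes A: "A \<in> carrier_mat n n" and "Determinant.det A \<noteq> 0" and b: "b \<in> carrier_vec n"
  shows "\<exists>x\<in>carrier_vec n. A *\<^sub>v x = b"
proof -
  define C where "C = (1 / Determinant.det A) \<cdot>\<^sub>m adj_mat A"
  have C: "C \<in> carrier_mat n n"
    using adj_mat(1)[OF A] by (simp add: C_def)
  have "A * C = 1\<^sub>m n"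
    unfolding C_def mult_smult_distrib[OF A adj_mat(1)[OF A]] adj_mat(2)[OF A]
    using \<open>Determinant.det A \<noteq> 0\<close> by (intro eq_matI) auto
  then have "A *\<^sub>v (C *\<^sub>v b) = b"
    using assoc_mult_mat_vec[OF A C b] b by simp
  with C b show ?thesis
    by (intro bexI[of _ "C *\<^sub>v b"]) auto
qed

definition moment_mat :: "nat \<Rightarrow> nat \<Rightarrow> real mat" where
  "moment_mat n m = mat n n (\<lambda>(i, j). riemann_moment m (i + j))"

lemma moment_mat_mult_vec_nth:
  assumes "k < n"
  shows "(moment_mat n m *\<^sub>v vec n d) $ k = (\<Sum>j<n. riemann_moment m (k + j) * d j)"
  unfolding moment_mat_def mat_mult_vec_nth[OF assms] by simp

lemma moment_mat_tendsto_hilbert_mat: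
  assumes "i < n" and "j < n"
  shows "(\<lambda>m. moment_mat n m $$ (i, j)) \<longlonglongrightarrow> hilbert_mat n $$ (i, j)"
  using assms riemann_moment_tendsto[of "i + j"] by (simp add: moment_mat_def hilbert_mat_def)

lemma det_moment_mat_tendsto:
  "(\<lambda>m. Determinant.det (moment_mat n m)) \<longlonglongrightarrow> Determinant.det (hilbert_mat n)"
proof (rule det_tendsto[where n = n])
  show "(\<lambda>m. moment_mat n m $$ (i, j)) \<longlonglongrightarrow> hilbert_mat n $$ (i, j)" if "i < n" "j < n" for i j
    using that by (rule moment_mat_tendsto_hilbert_mat)
qed (simp_all add: moment_mat_def hilbert_mat_def)

lemma det_replace_col_moment_mat_tendsto:
  "(\<lambda>m. Determinant.det (replace_col (moment_mat n m) b k))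
     \<longlonglongrightarrow> Determinant.det (replace_col (hilbert_mat n) b k)"
proof (rule det_tendsto[where n = n])
  fix i j assume "i < n" "j < n"
  then show "(\<lambda>m. replace_col (moment_mat n m) b k $$ (i, j))
      \<longlonglongrightarrow> replace_col (hilbert_mat n) b k $$ (i, j)"
    using moment_mat_tendsto_hilbert_mat[of i n j]
    by (simp add: replace_col_def moment_mat_def hilbert_mat_def)
qed (simp_all add: replace_col_def moment_mat_def hilbert_mat_def)

lemma det_replace_col_hilbert_mat:
  assumes "n > 0"
  shows "Determinant.det (replace_col (hilbert_mat n) (unit_vec n 0) 0) =
    (real n)\<^sup>2 * Determinant.det (hilbert_mat n)"
proof -
  define c where "c = vec n (hilbert_solution n (\<lambda>i. of_bool (i = 0)))"
  have "hilbert_mat n *\<^sub>v c = unit_vec n 0"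
    by (simp add: c_def hilbert_mat_mult_vec unit_vec_def of_bool_def)
  then show ?thesis
    using cramer_lemma_mat[of "hilbert_mat n" n c 0] assms
    by (simp add: hilbert_mat_def c_def hilbert_solution_unit_0)
qed

lemma moment_mat_unit_solutions:
  assumes "n > 0"
  obtains d :: "nat \<Rightarrow> nat \<Rightarrow> real"
  where "\<forall>\<^sub>F m in sequentially. moment_mat n m *\<^sub>v vec n (d m) = unit_vec n 0"
    and "(\<lambda>m. d m 0) \<longlonglongrightarrow> (real n)\<^sup>2"
proof -
  let ?e = "unit_vec n 0 :: real vec"
  let ?ratio = "\<lambda>m. Determinant.det (replace_col (moment_mat n m) ?e 0) /
    Determinant.det (moment_mat n m)"
  have det_nonzero: "\<forall>\<^sub>F m in sequentially. Determinant.det (moment_mat n m) \<noteq> 0"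
    by (rule tendsto_imp_eventually_ne[OF det_moment_mat_tendsto det_hilbert_mat_nonzero])
  define x where "x m = (SOME x. x \<in> carrier_vec n \<and> moment_mat n m *\<^sub>v x = ?e)" for m
  define d where "d m j = x m $ j" for m j
  have "\<forall>\<^sub>F m in sequentially. moment_mat n m *\<^sub>v vec n (d m) = ?e \<and> ?ratio m = d m 0"
    using det_nonzero
  proof eventually_elim
    case (elim m)
    then have "\<exists>x. x \<in> carrier_vec n \<and> moment_mat n m *\<^sub>v x = ?e"
      using mult_mat_vec_solvable[of "moment_mat n m" n ?e] by (auto simp: moment_mat_def)
    then have x: "x m \<in> carrier_vec n" "moment_mat n m *\<^sub>v x m = ?e"
      unfolding x_def by (metis (mono_tags, lifting) someI_ex)+
    then have "vec n (d m) = x m"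
      by (intro eq_vecI) (auto simp: d_def)
    with x elim show ?case
      using cramer_lemma_mat[of "moment_mat n m" n "x m" 0] assms by (simp add: moment_mat_def d_def)
  qed
  then have sol: "\<forall>\<^sub>F m in sequentially. moment_mat n m *\<^sub>v vec n (d m) = ?e"
    and ratio: "\<forall>\<^sub>F m in sequentially. ?ratio m = d m 0"
    by (auto elim: eventually_mono)
  have "?ratio \<longlonglongrightarrow> (real n)\<^sup>2"
    using tendsto_divide[OF det_replace_col_moment_mat_tendsto[of n ?e 0] det_moment_mat_tendsto[of n]
        det_hilbert_mat_nonzero[of n]]
    by (simp add: det_replace_col_hilbert_mat[OF assms] det_hilbert_mat_nonzero)
  then have "(\<lambda>m. d m 0) \<longlonglongrightarrow> (real n)\<^sup>2"
    using ratio by (rule Lim_transform_eventually)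
  with sol show thesis
    by (rule that)
qed

text \<open>\<open>poly_filter m (scaled_poly m n d)\<close> is \<open>\<psi> \<tau> = (1/m) \<Sum>j<n. d j (\<tau>/m)^j\<close>; with this
  scaling its moment conditions become the linear system with matrix \<open>moment_mat n m\<close>.\<close>

definition scaled_poly :: "nat \<Rightarrow> nat \<Rightarrow> (nat \<Rightarrow> real) \<Rightarrow> complex poly" where
  "scaled_poly m n d = (\<Sum>j<n. monom (complex_of_real (d j / real m ^ Suc j)) j)"

lemma degree_scaled_poly:
  assumes "n > 0"
  shows "degree (scaled_poly m n d) < n"
proof -
  have "degree (scaled_poly m n d) \<le> n - 1"
    unfolding scaled_poly_def by (intro degree_sum_le order.trans[OF degree_monom_le]) auto
  with assms show ?thesis
    by linarith
qed

lemma poly_scaled_poly: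
  "poly (scaled_poly m n d) (of_nat \<tau>) = of_real (\<Sum>j<n. d j / real m ^ Suc j * real \<tau> ^ j)"
  by (simp add: scaled_poly_def poly_sum poly_monom)

lemma sum_moments_scaled_polynomial:
  assumes "m > 0"
  shows "(\<Sum>\<tau>\<le>m. (\<Sum>j<n. d j / real m ^ Suc j * real \<tau> ^ j) * real \<tau> ^ k) =
    real m ^ k * (\<Sum>j<n. riemann_moment m (k + j) * d j)"
proof -
  have "(\<Sum>\<tau>\<le>m. (\<Sum>j<n. d j / real m ^ Suc j * real \<tau> ^ j) * real \<tau> ^ k) =
      (\<Sum>j<n. d j / real m ^ Suc j * (\<Sum>\<tau>\<le>m. real \<tau> ^ (k + j)))"
    unfolding sum_distrib_right by (subst sum.swap) (simp add: sum_distrib_left power_add mult_ac)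
  also have "\<dots> = (\<Sum>j<n. real m ^ k * (riemann_moment m (k + j) * d j))"
    using assms by (intro sum.cong refl) (simp add: riemann_moment_eq power_add field_simps)
  finally show ?thesis
    by (simp add: sum_distrib_left)
qed

lemma unit_moments_scaled_poly_filter:
  assumes "m > 0" and sol: "moment_mat n m *\<^sub>v vec n d = unit_vec n 0"
  shows "unit_moments m n (poly_filter m (scaled_poly m n d))"
  unfolding unit_moments_def
proof (intro allI impI)
  fix k assume "k < n"
  have "(\<Sum>j<n. riemann_moment m (k + j) * d j) = of_bool (k = 0)"
    using moment_mat_mult_vec_nth[OF \<open>k < n\<close>, of m d] sol \<open>k < n\<close> by (cases "k = 0") auto
  then have "(\<Sum>\<tau>\<le>m. (\<Sum>j<n. d j / real m ^ Suc j * real \<tau> ^ j) * real \<tau> ^ k) = of_bool (k = 0)"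
    using sum_moments_scaled_polynomial[OF \<open>m > 0\<close>, where d = d and n = n and k = k]
    by (cases "k = 0") simp_all
  moreover have "(\<Sum>\<tau>\<le>m. poly_filter m (scaled_poly m n d) (int \<tau>) * of_nat \<tau> ^ k) =
      of_real (\<Sum>\<tau>\<le>m. (\<Sum>j<n. d j / real m ^ Suc j * real \<tau> ^ j) * real \<tau> ^ k)"
    unfolding of_real_sum by (intro sum.cong refl) (simp add: poly_filter_of_nat poly_scaled_poly)
  ultimately show
    "(\<Sum>\<tau>\<le>m. poly_filter m (scaled_poly m n d) (int \<tau>) * of_nat \<tau> ^ k) = of_bool (k = 0)"
    by simp
qed

lemma l2norm_scaled_poly_filter:
  assumes "m > 0" and "n > 0" and sol: "moment_mat n m *\<^sub>v vec n d = unit_vec n 0"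
  shows "real m * (l2norm (poly_filter m (scaled_poly m n d)))\<^sup>2 = d 0"
proof -
  have "(\<Sum>j<n. d j / real m ^ Suc j * 0 ^ j) = (\<Sum>j<n. if j = 0 then d j / real m else 0)"
    by (intro sum.cong) auto
  also have "\<dots> = d 0 / real m"
    using \<open>n > 0\<close> by simp
  finally have "poly (scaled_poly m n d) 0 = of_real (d 0 / real m)"
    using poly_scaled_poly[of m n d 0] by simp
  then have "complex_of_real ((l2norm (poly_filter m (scaled_poly m n d)))\<^sup>2) =
      of_real (d 0 / real m)"
    using l2norm_poly_filter[OF unit_moments_scaled_poly_filter[OF \<open>m > 0\<close> sol]
        degree_scaled_poly[OF \<open>n > 0\<close>]]
    by simp
  then have "(l2norm (poly_filter m (scaled_poly m n d)))\<^sup>2 = d 0 / real m"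
    by (simp only: of_real_eq_iff)
  then show ?thesis
    using \<open>m > 0\<close> by simp
qed

lemma l2norm_minimal_filter_eq_poly_filter:
  assumes "unit_moments m n (poly_filter m p)" and "degree p < n"
    and "\<phi> \<in> Cplus m" and "reproducing \<phi> (polyseq n)"
    and "\<forall>\<psi>\<in>Cplus m. reproducing \<psi> (polyseq n) \<longrightarrow> l2norm \<phi> \<le> l2norm \<psi>"
  shows "l2norm \<phi> = l2norm (poly_filter m p)"
proof (rule antisym)
  have "reproducing (poly_filter m p) (polyseq n)"
    using assms(1) by (simp add: reproducing_polyseq_iff_unit_moments[OF poly_filter_Cplus])
  with assms(5) show "l2norm \<phi> \<le> l2norm (poly_filter m p)"
    using poly_filter_Cplus by blast
  have "unit_moments m n \<phi>"
    using assms(4) by (simp add: reproducing_polyseq_iff_unit_moments[OF assms(3)])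
  then show "l2norm (poly_filter m p) \<le> l2norm \<phi>"
    by (rule l2norm_poly_filter_le[OF assms(1-3)])
qed

theorem proposition13:
  fixes s :: nat and \<phi> :: "nat \<Rightarrow> int \<Rightarrow> complex"
  assumes "\<And>m. (\<exists>\<psi>\<in>Cplus m. reproducing \<psi> (polyseq s)) \<Longrightarrow>
             \<phi> m \<in> Cplus m \<and> reproducing (\<phi> m) (polyseq s) \<and>
             (\<forall>\<psi>\<in>Cplus m. reproducing \<psi> (polyseq s) \<longrightarrow> l2norm (\<phi> m) \<le> l2norm \<psi>)"
  shows "(\<lambda>m. real m * (l2norm (\<phi> m))\<^sup>2) \<longlonglongrightarrow> (real s)\<^sup>2"
proof (cases "s = 0")
  case True
  have "l2norm (\<phi> m) = 0" for m
  proof (rule antisym)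
    have "(\<lambda>_. 0) \<in> Cplus m \<and> reproducing (\<lambda>_. 0) (polyseq s)"
      using True reproducing_polyseq_iff_unit_moments[of "\<lambda>_. 0" m s]
      by (simp add: Cplus_def unit_moments_def)
    then have "l2norm (\<phi> m) \<le> l2norm (\<lambda>_. 0)"
      using assms[of m] by blast
    then show "l2norm (\<phi> m) \<le> 0"
      by (simp add: l2norm_def[of "\<lambda>_. 0"])
  qed (rule l2norm_nonneg)
  with True show ?thesis
    by simp
next
  case False
  then obtain d :: "nat \<Rightarrow> nat \<Rightarrow> real"
    where sol: "\<forall>\<^sub>F m in sequentially. moment_mat s m *\<^sub>v vec s (d m) = unit_vec s 0"
      and lim: "(\<lambda>m. d m 0) \<longlonglongrightarrow> (real s)\<^sup>2"
    using moment_mat_unit_solutions by blast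
  have "\<forall>\<^sub>F m in sequentially. d m 0 = real m * (l2norm (\<phi> m))\<^sup>2"
    using sol eventually_gt_at_top[of 0]
  proof eventually_elim
    case (elim m)
    let ?p = "scaled_poly m s (d m)"
    have \<psi>: "unit_moments m s (poly_filter m ?p)" "degree ?p < s"
      using elim False by (simp_all add: unit_moments_scaled_poly_filter degree_scaled_poly)
    then have "reproducing (poly_filter m ?p) (polyseq s)"
      by (simp add: reproducing_polyseq_iff_unit_moments[OF poly_filter_Cplus])
    then have "l2norm (\<phi> m) = l2norm (poly_filter m ?p)"
      using assms[of m] poly_filter_Cplus by (blast intro: l2norm_minimal_filter_eq_poly_filter[OF \<psi>])
    with elim False show ?case
      using l2norm_scaled_poly_filter[of m s "d m"] by simp
  qed
  with lim show ?thesis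
    by (rule Lim_transform_eventually)
qed

end
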